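(* Let $m\in\mathbb N$, $b>0$, $\tau>\gamma_0=1.5088\ldots$, $A>0$, $n\in\mathbb N$, and $\sigma:=n/(mb\tau)$. Let $f:\mathbb C^m\to\mathbb C$ be entire with $|f(w)|\le A\exp(\sigma\sum_{j=1}^m|w_j|)$ for all $w\in\mathbb C^m$. Then there is a polynomial $P_n\in\mathcal Q_{n,m}$ such that $$\|f-P_n\|_{L_\infty(Q^m_b)}\le C A e^{n\psi(\tau)},\qquad C\le m2^m\big(1-1/(\tau+\sqrt{1+\tau^2})\big)^{-m}.$$
   Context: $\psi(\tau)=\frac{\sqrt{1+\tau^2}}{\tau}-\log(\tau+\sqrt{1+\tau^2})$, whose unique positive zero is $\gamma_0=1.5088\ldots$. $\mathcal Q_{n,m}$ is the set of polynomials $\sum_{k\in\mathbb Z^m_+,\max_jk_j\le n}c_kx^k$ with complex coefficients. $Q^m_b=\{x\in\mathbb R^m:\max_j|x_j|\le b\}$. *)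

theory Defs
  imports "HOL-Analysis.Analysis"
begin

definition psi :: "real \<Rightarrow> real" where
  "psi t = sqrt (1 + t\<^sup>2) / t - ln (t + sqrt (1 + t\<^sup>2))"

text \<open>gamma0 = the unique positive zero of psi (approx. 1.5088).\<close>
definition gamma0 :: real where
  "gamma0 = (THE t. t > 0 \<and> psi t = 0)"

definition entire_cm :: "(complex ^ 'm \<Rightarrow> complex) \<Rightarrow> bool" where
  "entire_cm f \<longleftrightarrow> (\<forall>z. \<exists>L. (f has_derivative L) (at z) \<and> (\<forall>c x. L (c *s x) = c * L x))"

definition polyQ :: "nat \<Rightarrow> (complex ^ 'm \<Rightarrow> complex) set" where
  "polyQ n = {P. \<exists>c :: ('m \<Rightarrow> nat) \<Rightarrow> complex.
      P = (\<lambda>x. \<Sum>k\<in>{k. \<forall>j. k j \<le> n}. c k * (\<Prod>j\<in>UNIV. (x $ j) ^ k j))}"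

definition cvec :: "real ^ 'm \<Rightarrow> complex ^ 'm" where
  "cvec x = (\<chi> j. complex_of_real (x $ j))"

definition cubeQ :: "real \<Rightarrow> (real ^ 'm) set" where
  "cubeQ b = {x. \<forall>j. \<bar>x $ j\<bar> \<le> b}"

end

theory Submission
  imports Defs "HOL-Complex_Analysis.Complex_Analysis" "HOL-Computational_Algebra.Polynomial"
begin

text \<open>In one variable, \<open>cheb_approx\<close> truncates the Chebyshev expansion of \<open>g\<close> on
  \<open>[-b, b]\<close> at degree \<open>n\<close>, with coefficients computed by the trapezoidal rule on the circle
  \<open>|z| = R\<close> pulled back through the Joukowski map \<open>z \<mapsto> b (z + 1/z) / 2\<close>. If \<open>|g| \<le> M\<close>
  on the image ellipse, these coefficients are \<open>O(M / R\<^sup>l)\<close>, the operator has Lebesgue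
  constant \<open>(R + 1) / (R - 1)\<close>, and it reproduces polynomials of degree less than half the
  number of nodes. Comparing an entire \<open>g\<close> with a Taylor polynomial of high degree therefore
  gives an error of about \<open>2 M / (R\<^sup>n (R - 1))\<close>. Applying the operator in each of the
  \<open>m\<close> coordinates in turn produces a tensor-product polynomial in \<open>polyQ n\<close>, and the
  errors telescope to at most \<open>m (2R / (R - 1))\<^sup>m M / R\<^sup>n\<close>. For \<open>R = \<tau> + sqrt (1 + \<tau>\<^sup>2)\<close>
  the ellipse has semi-axis \<open>b sqrt (1 + \<tau>\<^sup>2)\<close>, where the growth bound gives
  \<open>M = A exp (n sqrt (1 + \<tau>\<^sup>2) / \<tau>)\<close>, and \<open>M / R\<^sup>n = A exp (n \<psi>(\<tau>))\<close>.\<close>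

section \<open>Chebyshev polynomials\<close>

fun cheb :: "nat \<Rightarrow> complex \<Rightarrow> complex" where
  "cheb 0 = (\<lambda>y. 1)"
| "cheb (Suc 0) = (\<lambda>y. y)"
| "cheb (Suc (Suc l)) = (\<lambda>y. 2 * y * cheb (Suc l) y - cheb l y)"

lemma cheb_joukowski:
  assumes "z \<noteq> 0"
  shows "cheb l ((z + inverse z) / 2) = (z ^ l + inverse z ^ l) / 2"
proof (induction l rule: cheb.induct)
  case (3 l)
  let ?w = "(z + inverse z) / 2"
  have "cheb (Suc (Suc l)) ?w = 2 * ?w * cheb (Suc l) ?w - cheb l ?w"
    by simp
  also have "\<dots> = 2 * ?w * ((z ^ Suc l + inverse z ^ Suc l) / 2) - (z ^ l + inverse z ^ l) / 2"
    by (simp only: 3)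
  also have "\<dots> = (z ^ Suc (Suc l) + inverse z ^ Suc (Suc l)) / 2"
    using assms by (simp add: field_simps)
  finally show ?case .
qed simp_all

lemma norm_cheb_le_1:
  assumes "Im y = 0" "norm y \<le> 1"
  shows "norm (cheb l y) \<le> 1"
proof -
  define z where "z = Complex (Re y) (sqrt (1 - (Re y)\<^sup>2))"
  have "(Re y)\<^sup>2 \<le> 1"
    using assms by (simp add: cmod_def abs_square_le_1)
  then have norm_z: "norm z = 1"
    unfolding z_def cmod_def by simp
  then have z0: "z \<noteq> 0"
    by auto
  have "inverse z = cnj z"
    using complex_norm_square[of z] norm_z by (intro inverse_unique) simp
  then have y_eq: "y = (z + inverse z) / 2"
    using assms unfolding z_def by (simp add: complex_eq_iff)
  have "cheb l y = (z ^ l + inverse z ^ l) / 2"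
    unfolding y_eq by (rule cheb_joukowski[OF z0])
  also have "norm \<dots> \<le> (norm (z ^ l) + norm (inverse z ^ l)) / 2"
    by (simp add: norm_divide norm_triangle_ineq)
  also have "\<dots> = 1"
    using norm_z by (simp add: norm_power norm_inverse)
  finally show ?thesis .
qed

definition upoly :: "nat \<Rightarrow> (complex \<Rightarrow> complex) set" where
  "upoly n = {poly p | p. degree p \<le> n}"

lemma upoly_mono: "n \<le> n' \<Longrightarrow> g \<in> upoly n \<Longrightarrow> g \<in> upoly n'"
  unfolding upoly_def by auto

lemma upoly_scale:
  assumes "g \<in> upoly n"
  shows "(\<lambda>y. c * g y) \<in> upoly n"
proof -
  obtain p where p: "degree p \<le> n" "g = poly p"
    using assms unfolding upoly_def by blast
  have "degree (smult c p) \<le> n"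
    using p(1) degree_smult_le[of c p] by linarith
  moreover have "(\<lambda>y. c * g y) = poly (smult c p)"
    using p(2) by auto
  ultimately show ?thesis
    unfolding upoly_def by blast
qed

lemma upoly_compose_scale:
  assumes "g \<in> upoly n"
  shows "(\<lambda>y. g (c * y)) \<in> upoly n"
proof -
  obtain p where p: "degree p \<le> n" "g = poly p"
    using assms unfolding upoly_def by blast
  have "degree (p \<circ>\<^sub>p [:0, c:]) \<le> n"
    using p(1) by (simp add: degree_pcompose)
  moreover have "(\<lambda>y. g (c * y)) = poly (p \<circ>\<^sub>p [:0, c:])"
    using p(2) by (simp add: poly_pcompose fun_eq_iff mult.commute)
  ultimately show ?thesis
    unfolding upoly_def by blast
qed

lemma upoly_sum:
  assumes "finite I" "\<And>i. i \<in> I \<Longrightarrow> g i \<in> upoly n"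
  shows "(\<lambda>y. \<Sum>i\<in>I. g i y) \<in> upoly n"
proof -
  have "\<forall>i\<in>I. \<exists>p. degree p \<le> n \<and> g i = poly p"
    using assms(2) unfolding upoly_def by blast
  then obtain p where p: "\<forall>i\<in>I. degree (p i) \<le> n \<and> g i = poly (p i)"
    by (rule bchoice[elim_format]) blast
  have "degree (sum p I) \<le> n"
    using p by (intro degree_sum_le assms(1)) auto
  moreover have "(\<lambda>y. \<Sum>i\<in>I. g i y) = poly (sum p I)"
    using p by (simp add: poly_sum fun_eq_iff)
  ultimately show ?thesis
    unfolding upoly_def by blast
qed

lemma power_in_upoly: "(\<lambda>y. y ^ k) \<in> upoly k"
proof -
  have "(\<lambda>y. y ^ k) = poly (monom (1 :: complex) k)"
    by (simp add: fun_eq_iff poly_monom)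
  then show ?thesis
    unfolding upoly_def using degree_monom_le by blast
qed

lemma cheb_in_upoly: "cheb l \<in> upoly l"
proof (induction l rule: cheb.induct)
  case 1
  show ?case
    unfolding upoly_def by (auto intro!: exI[of _ 1])
next
  case 2
  show ?case
    unfolding upoly_def by (auto intro!: exI[of _ "[:0, 1:]"])
next
  case (3 l)
  then obtain p q where p: "degree p \<le> Suc l" "cheb (Suc l) = poly p"
    and q: "degree q \<le> l" "cheb l = poly q"
    unfolding upoly_def by blast
  have "degree ([:0, 2:] * p) \<le> Suc (Suc l)"
    using p(1) degree_mult_le[of "[:0, 2:]" p] by simp
  then have "degree ([:0, 2:] * p - q) \<le> Suc (Suc l)"
    using q(1) by (intro degree_diff_le) simp_all
  moreover have "cheb (Suc (Suc l)) = poly ([:0, 2:] * p - q)"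
    using p(2) q(2) by (simp add: fun_eq_iff)
  ultimately show ?case
    unfolding upoly_def by blast
qed

definition cheb_span :: "real \<Rightarrow> nat \<Rightarrow> (complex \<Rightarrow> complex) set" where
  "cheb_span b N = {g. \<exists>\<alpha>. \<forall>y. g y = (\<Sum>j\<le>N. \<alpha> j * cheb j (y / of_real b))}"

lemma cheb_span_mono:
  assumes "N \<le> N'" "g \<in> cheb_span b N"
  shows "g \<in> cheb_span b N'"
proof -
  obtain \<alpha> where \<alpha>: "\<And>y. g y = (\<Sum>j\<le>N. \<alpha> j * cheb j (y / of_real b))"
    using assms(2) unfolding cheb_span_def by blast
  have "g y = (\<Sum>j\<le>N'. (if j \<le> N then \<alpha> j else 0) * cheb j (y / of_real b))" for y
    unfolding \<alpha> using assms(1) by (intro sum.mono_neutral_cong_right[symmetric]) auto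
  then show ?thesis
    unfolding cheb_span_def by (intro CollectI exI[of _ "\<lambda>j. if j \<le> N then \<alpha> j else 0"] allI)
qed

lemma cheb_span_add:
  "g \<in> cheb_span b N \<Longrightarrow> h \<in> cheb_span b N \<Longrightarrow> (\<lambda>y. g y + h y) \<in> cheb_span b N"
  unfolding cheb_span_def
  by (force simp: sum.distrib distrib_right intro: exI[of _ "\<lambda>j. \<alpha> j + \<beta> j" for \<alpha> \<beta>])

lemma cheb_span_scale: "g \<in> cheb_span b N \<Longrightarrow> (\<lambda>y. c * g y) \<in> cheb_span b N"
  unfolding cheb_span_def
  by (force simp: sum_distrib_left mult.assoc intro: exI[of _ "\<lambda>j. c * \<alpha> j" for \<alpha>])

lemma cheb_span_sum:
  "finite I \<Longrightarrow> (\<And>i. i \<in> I \<Longrightarrow> g i \<in> cheb_span b N) \<Longrightarrow> (\<lambda>y. \<Sum>i\<in>I. g i y) \<in> cheb_span b N"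
proof (induction I rule: finite_induct)
  case empty
  have "(\<lambda>y. 0) \<in> cheb_span b N"
    unfolding cheb_span_def by (auto intro: exI[of _ "\<lambda>_. 0"])
  then show ?case by simp
qed (simp add: cheb_span_add)

lemma cheb_in_cheb_span:
  assumes "k \<le> N"
  shows "(\<lambda>y. cheb k (y / of_real b)) \<in> cheb_span b N"
proof -
  have "cheb k y = (\<Sum>j\<le>N. (if j = k then 1 else 0) * cheb j y)" for y
    using assms by (simp add: if_distrib[of "\<lambda>c. c * _"] cong: if_cong)
  then show ?thesis
    unfolding cheb_span_def by (intro CollectI exI[of _ "\<lambda>j. if j = k then 1 else 0"] allI)
qed

text \<open>By the recurrence, \<open>2 y T\<^sub>j(y) = T\<^sub>j\<^sub>+\<^sub>1(y) + T\<^sub>j\<^sub>-\<^sub>1(y)\<close>.\<close>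

lemma cheb_span_mult_id:
  assumes "b \<noteq> 0" "g \<in> cheb_span b N"
  shows "(\<lambda>y. y * g y) \<in> cheb_span b (Suc N)"
proof -
  have cheb_times_id: "(\<lambda>y. y * cheb j (y / of_real b)) \<in> cheb_span b (Suc j)" for j
  proof (cases j)
    case 0
    then show ?thesis
      using cheb_span_scale[OF cheb_in_cheb_span[of 1 "Suc j" b], of "of_real b"] assms(1) by simp
  next
    case (Suc i)
    have "y * cheb j (y / of_real b) = of_real b / 2 * cheb (Suc (Suc i)) (y / of_real b)
        + of_real b / 2 * cheb i (y / of_real b)" for y
      using Suc assms(1) by (simp add: field_simps)
    then show ?thesis
      using Suc by (simp only:) (intro cheb_span_add cheb_span_scale cheb_in_cheb_span; simp)
  qed
  obtain \<alpha> where \<alpha>: "\<And>y. g y = (\<Sum>j\<le>N. \<alpha> j * cheb j (y / of_real b))"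
    using assms(2) unfolding cheb_span_def by blast
  have "(\<lambda>y. \<Sum>j\<le>N. \<alpha> j * (y * cheb j (y / of_real b))) \<in> cheb_span b (Suc N)"
    by (intro cheb_span_sum cheb_span_scale cheb_span_mono[OF _ cheb_times_id]) auto
  then show ?thesis
    unfolding \<alpha> by (simp add: sum_distrib_left mult_ac)
qed

lemma upoly_eq_cheb_span:
  assumes "b \<noteq> 0"
  shows "upoly N = cheb_span b N"
proof
  show "cheb_span b N \<subseteq> upoly N"
  proof
    fix g assume "g \<in> cheb_span b N"
    then obtain \<alpha> where \<alpha>: "g = (\<lambda>y. \<Sum>j\<le>N. \<alpha> j * cheb j (inverse (of_real b) * y))"
      unfolding cheb_span_def by (auto simp: divide_inverse mult.commute)
    show "g \<in> upoly N"
      unfolding \<alpha>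
      by (intro upoly_sum upoly_scale upoly_compose_scale[of "cheb _"] upoly_mono[OF _ cheb_in_upoly]) auto
  qed
  show "upoly N \<subseteq> cheb_span b N"
  proof
    fix g assume "g \<in> upoly N"
    then obtain p where "degree p \<le> N" "g = poly p"
      unfolding upoly_def by blast
    then show "g \<in> cheb_span b N"
    proof (induction N arbitrary: p g)
      case 0
      then show ?case
        using cheb_span_scale[OF cheb_in_cheb_span[of 0 0 b], of "coeff p 0"]
        by (auto elim: degree_eq_zeroE)
    next
      case (Suc N)
      obtain a q where pq: "p = pCons a q"
        by (cases p)
      have "degree q \<le> N"
        using Suc.prems(1) pq by (cases "q = 0") auto
      then have "(\<lambda>y. y * poly q y) \<in> cheb_span b (Suc N)"
        by (intro cheb_span_mult_id assms Suc.IH) auto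
      moreover have "(\<lambda>y. a) \<in> cheb_span b (Suc N)"
        using cheb_span_scale[OF cheb_in_cheb_span[of 0 "Suc N" b], of a] by simp
      ultimately show ?case
        using cheb_span_add Suc.prems(2) pq by fastforce
    qed
  qed
qed

section \<open>Discrete Chebyshev coefficients\<close>

definition root_unity :: "nat \<Rightarrow> complex" where
  "root_unity N = exp (2 * of_real pi * \<i> / of_nat N)"

lemma root_unity_nonzero [simp]: "root_unity N \<noteq> 0"
  unfolding root_unity_def by simp

lemma root_unity_power: "root_unity N ^ k = exp (2 * of_real pi * \<i> * of_nat k / of_nat N)"
  unfolding root_unity_def by (simp add: exp_of_nat_mult[symmetric] mult_ac)

lemma root_unity_power_N: "N > 0 \<Longrightarrow> (root_unity N ^ k) ^ N = 1"
  using complex_root_unity[of N k] unfolding root_unity_power by simp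

lemma sum_powers_root_unity_ratio:
  assumes "a < N" "c < N"
  shows "(\<Sum>s<N. (root_unity N ^ a / root_unity N ^ c) ^ s) = (if a = c then of_nat N else 0)"
proof (cases "a = c")
  case False
  define r where "r = root_unity N ^ a / root_unity N ^ c"
  have "root_unity N ^ a \<noteq> root_unity N ^ c"
    using False assms complex_root_unity_eq[of N a c] unfolding root_unity_power by simp
  then have "r \<noteq> 1"
    unfolding r_def by simp
  moreover have "r ^ N = 1"
    using assms unfolding r_def power_divide by (simp add: root_unity_power_N)
  ultimately show ?thesis
    using False geometric_sum[of r N] unfolding r_def by simp
qed simp

definition joukowski :: "real \<Rightarrow> complex \<Rightarrow> complex" where
  "joukowski b z = of_real b * (z + inverse z) / 2"

definition cheb_node :: "real \<Rightarrow> nat \<Rightarrow> nat \<Rightarrow> complex" where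
  "cheb_node R N s = of_real R * root_unity N ^ s"

definition cheb_weight :: "nat \<Rightarrow> complex" where
  "cheb_weight l = (if l = 0 then 1 else 2)"

text \<open>The trapezoidal rule on the circle \<open>|z| = R\<close> for the \<open>l\<close>-th Laurent coefficient of
  \<open>g \<circ> joukowski b\<close>; for \<open>g\<close> analytic inside the image ellipse this approximates the
  \<open>l\<close>-th Chebyshev coefficient of \<open>g\<close> on \<open>[-b, b]\<close>, up to the factor \<open>cheb_weight l\<close>.\<close>

definition disc_cheb_coeff :: "real \<Rightarrow> real \<Rightarrow> nat \<Rightarrow> (complex \<Rightarrow> complex) \<Rightarrow> nat \<Rightarrow> complex" where
  "disc_cheb_coeff b R N g l =
     (\<Sum>s<N. g (joukowski b (cheb_node R N s)) * inverse (cheb_node R N s) ^ l) / of_nat N"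

definition cheb_approx ::
    "real \<Rightarrow> real \<Rightarrow> nat \<Rightarrow> nat \<Rightarrow> (complex \<Rightarrow> complex) \<Rightarrow> complex \<Rightarrow> complex" where
  "cheb_approx b R N n g y =
     (\<Sum>l\<le>n. cheb_weight l * disc_cheb_coeff b R N g l * cheb l (y / of_real b))"

lemma norm_cheb_node: "R \<ge> 0 \<Longrightarrow> norm (cheb_node R N s) = R"
  unfolding cheb_node_def root_unity_def by (simp add: norm_mult norm_power)

lemma norm_joukowski_cheb_node_le:
  assumes "b \<ge> 0" "R > 0"
  shows "norm (joukowski b (cheb_node R N s)) \<le> b * (R + inverse R) / 2"
proof -
  have "norm (joukowski b (cheb_node R N s))
      = b * norm (cheb_node R N s + inverse (cheb_node R N s)) / 2"
    unfolding joukowski_def using assms by (simp add: norm_mult norm_divide)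
  also have "\<dots> \<le> b * (norm (cheb_node R N s) + norm (inverse (cheb_node R N s))) / 2"
    using assms by (intro divide_right_mono mult_left_mono norm_triangle_ineq) auto
  finally show ?thesis
    using assms by (simp add: norm_inverse norm_cheb_node)
qed

lemma joukowski_radius_ge_1: "R > 0 \<Longrightarrow> (R + inverse R) / 2 \<ge> (1::real)"
proof -
  assume "R > 0"
  then have "R + inverse R - 2 = (R - 1)\<^sup>2 / R"
    by (simp add: field_simps power2_eq_square)
  also have "\<dots> \<ge> 0"
    using \<open>R > 0\<close> by simp
  finally show ?thesis
    by simp
qed

lemma norm_disc_cheb_coeff_le:
  assumes "N > 0" "R > 0"
    and "\<And>s. s < N \<Longrightarrow> norm (g (joukowski b (cheb_node R N s))) \<le> B"
  shows "norm (disc_cheb_coeff b R N g l) \<le> B / R ^ l"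
proof -
  have "norm (\<Sum>s<N. g (joukowski b (cheb_node R N s)) * inverse (cheb_node R N s) ^ l)
      \<le> (\<Sum>s<N. B / R ^ l)"
  proof (rule sum_norm_le)
    fix s assume "s \<in> {..<N}"
    have "norm (g (joukowski b (cheb_node R N s)) * inverse (cheb_node R N s) ^ l)
        = norm (g (joukowski b (cheb_node R N s))) / R ^ l"
      using assms(2) by (simp add: norm_mult norm_power norm_inverse norm_cheb_node
          power_inverse divide_inverse)
    also have "\<dots> \<le> B / R ^ l"
      using assms(2,3) \<open>s \<in> {..<N}\<close> by (intro divide_right_mono) auto
    finally show "norm (g (joukowski b (cheb_node R N s)) * inverse (cheb_node R N s) ^ l) \<le> B / R ^ l" .
  qed
  then show ?thesis
    using assms(1) unfolding disc_cheb_coeff_def by (simp add: norm_divide field_simps)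
qed

lemma sum_norm_cheb_weight_le:
  assumes "R > 1"
  shows "(\<Sum>l\<le>n. norm (cheb_weight l) / R ^ l) \<le> (R + 1) / (R - 1)"
proof -
  have "(\<Sum>l\<le>n. (1 / R) ^ l) = (1 - (1 / R) ^ Suc n) / (1 - 1 / R)"
    using assms sum_gp_strict[of "1 / R" "Suc n"] by (simp add: lessThan_Suc_atMost)
  also have "\<dots> \<le> 1 / (1 - 1 / R)"
    using assms by (intro divide_right_mono) auto
  also have "\<dots> = R / (R - 1)"
    using assms by (simp add: field_simps)
  finally have geometric: "(\<Sum>l\<le>n. (1 / R) ^ l) \<le> R / (R - 1)" .
  have "(\<Sum>l\<le>n. norm (cheb_weight l) / R ^ l) = (\<Sum>l\<le>n. 2 * (1 / R) ^ l - (if l = 0 then 1 else 0))"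
    by (intro sum.cong) (auto simp: cheb_weight_def power_one_over)
  also have "\<dots> = 2 * (\<Sum>l\<le>n. (1 / R) ^ l) - 1"
    by (simp add: sum_subtractf sum_distrib_left)
  also have "\<dots> \<le> (R + 1) / (R - 1)"
    using geometric assms by (simp add: field_simps)
  finally show ?thesis .
qed

lemma norm_cheb_approx_le:
  assumes "N > 0" "R > 1" "b > 0" "Im y = 0" "norm y \<le> b"
    and "\<And>s. s < N \<Longrightarrow> norm (g (joukowski b (cheb_node R N s))) \<le> B"
  shows "norm (cheb_approx b R N n g y) \<le> (R + 1) / (R - 1) * B"
proof -
  have "B \<ge> 0"
    using assms(1) assms(6)[of 0] by (meson norm_ge_zero order_trans)
  have "norm (cheb_approx b R N n g y) \<le> (\<Sum>l\<le>n. norm (cheb_weight l) / R ^ l * B)"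
    unfolding cheb_approx_def
  proof (rule sum_norm_le)
    fix l
    have "norm (cheb l (y / of_real b)) \<le> 1"
      using assms by (intro norm_cheb_le_1) (auto simp: norm_divide)
    moreover have "norm (disc_cheb_coeff b R N g l) \<le> B / R ^ l"
      using assms by (intro norm_disc_cheb_coeff_le) auto
    ultimately have "norm (cheb_weight l) * norm (disc_cheb_coeff b R N g l) * norm (cheb l (y / of_real b))
        \<le> norm (cheb_weight l) * (B / R ^ l) * 1"
      using \<open>B \<ge> 0\<close> assms(2) by (intro mult_mono mult_left_mono) auto
    then show "norm (cheb_weight l * disc_cheb_coeff b R N g l * cheb l (y / of_real b))
        \<le> norm (cheb_weight l) / R ^ l * B"
      by (simp add: norm_mult)
  qed
  also have "\<dots> \<le> (R + 1) / (R - 1) * B"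
    unfolding sum_distrib_right[symmetric]
    using sum_norm_cheb_weight_le[OF assms(2)] \<open>B \<ge> 0\<close> by (rule mult_right_mono)
  finally show ?thesis .
qed

lemma cheb_approx_diff:
  "cheb_approx b R N n (\<lambda>t. g t - h t) y = cheb_approx b R N n g y - cheb_approx b R N n h y"
  unfolding cheb_approx_def disc_cheb_coeff_def
  by (simp add: sum_subtractf algebra_simps diff_divide_distrib)

lemma disc_cheb_coeff_sum:
  "finite J \<Longrightarrow> disc_cheb_coeff b R N (\<lambda>t. \<Sum>j\<in>J. a j * g j t) l
     = (\<Sum>j\<in>J. a j * disc_cheb_coeff b R N (g j) l)"
  unfolding disc_cheb_coeff_def
  by (simp add: sum_distrib_right sum_distrib_left sum_divide_distrib mult.assoc
      flip: sum.swap[of _ J])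

lemma cheb_joukowski_node_term:
  assumes "b \<noteq> 0" "R > 0"
  shows "cheb j (joukowski b (cheb_node R N s) / of_real b) * inverse (cheb_node R N s) ^ l
    = (of_real (R ^ j / R ^ l) * (root_unity N ^ j / root_unity N ^ l) ^ s
       + of_real (1 / R ^ (j + l)) * (root_unity N ^ 0 / root_unity N ^ (j + l)) ^ s) / 2"
proof -
  define u where "u = root_unity N ^ s"
  have u0: "u \<noteq> 0"
    unfolding u_def by simp
  have z: "cheb_node R N s = of_real R * u" "cheb_node R N s \<noteq> 0"
    using assms(2) u0 unfolding cheb_node_def u_def by auto
  have swap: "(root_unity N ^ a / root_unity N ^ c) ^ s = u ^ a / u ^ c" for a c
    unfolding u_def by (simp add: power_divide flip: power_mult) (simp add: mult.commute)
  have jz: "joukowski b (cheb_node R N s) / of_real b = (cheb_node R N s + inverse (cheb_node R N s)) / 2"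
    unfolding joukowski_def using assms(1) by simp
  have "cheb j (joukowski b (cheb_node R N s) / of_real b) * inverse (cheb_node R N s) ^ l
      = (cheb_node R N s ^ j + inverse (cheb_node R N s) ^ j) / 2 * inverse (cheb_node R N s) ^ l"
    unfolding jz by (simp only: cheb_joukowski[OF z(2)])
  also have "\<dots> = (of_real (R ^ j / R ^ l) * (u ^ j / u ^ l) + of_real (1 / R ^ (j + l)) * (1 / u ^ (j + l))) / 2"
    unfolding z(1) using assms(2) u0 by (simp add: field_simps power_add power_mult_distrib)
  finally show ?thesis
    unfolding swap by simp
qed

text \<open>Exact because the powers of an \<open>N\<close>-th root of unity sum to zero unless the exponent
  is a multiple of \<open>N\<close>.\<close>

lemma disc_cheb_coeff_cheb:
  assumes "j + l < N" "b \<noteq> 0" "R > 0"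
  shows "disc_cheb_coeff b R N (\<lambda>t. cheb j (t / of_real b)) l
           = (if j = l then inverse (cheb_weight l) else 0)"
proof -
  define \<omega> where "\<omega> = root_unity N"
  have "N > 0"
    using assms(1) by simp
  have "disc_cheb_coeff b R N (\<lambda>t. cheb j (t / of_real b)) l
      = (of_real (R ^ j / R ^ l) * (\<Sum>s<N. (\<omega> ^ j / \<omega> ^ l) ^ s)
         + of_real (1 / R ^ (j + l)) * (\<Sum>s<N. (\<omega> ^ 0 / \<omega> ^ (j + l)) ^ s)) / 2 / of_nat N"
    unfolding disc_cheb_coeff_def cheb_joukowski_node_term[OF assms(2,3)] \<omega>_def
    by (simp add: sum_distrib_left sum.distrib flip: sum_divide_distrib)
  also have "\<dots> = (of_real (R ^ j / R ^ l) * (if j = l then of_nat N else 0)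
         + of_real (1 / R ^ (j + l)) * (if 0 = j + l then of_nat N else 0)) / 2 / of_nat N"
    unfolding \<omega>_def using assms(1) by (simp only: sum_powers_root_unity_ratio add_less_cancel_left)
  also have "\<dots> = (if j = l then inverse (cheb_weight l) else 0)"
    using \<open>N > 0\<close> assms(3) by (auto simp: cheb_weight_def)
  finally show ?thesis .
qed

lemma cheb_weight_disc_cheb_coeff:
  assumes "2 * N < NN" "b \<noteq> 0" "R > 0" "l \<le> N"
    and q: "\<And>y. q y = (\<Sum>j\<le>N. \<alpha> j * cheb j (y / of_real b))"
  shows "cheb_weight l * disc_cheb_coeff b R NN q l = \<alpha> l"
proof -
  have "disc_cheb_coeff b R NN q l
      = (\<Sum>j\<le>N. \<alpha> j * disc_cheb_coeff b R NN (\<lambda>t. cheb j (t / of_real b)) l)"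
    unfolding q[abs_def] by (rule disc_cheb_coeff_sum) simp
  also have "\<dots> = (\<Sum>j\<le>N. \<alpha> j * (if j = l then inverse (cheb_weight l) else 0))"
    using assms by (intro sum.cong refl) (simp add: disc_cheb_coeff_cheb)
  also have "\<dots> = \<alpha> l * inverse (cheb_weight l)"
    using assms(4) by (simp add: if_distrib[of "\<lambda>c. _ * c"] cong: if_cong)
  finally show ?thesis
    by (simp add: cheb_weight_def)
qed

lemma cheb_approx_cheb_expansion:
  assumes "2 * N < NN" "n \<le> N" "b \<noteq> 0" "R > 0"
    and "\<And>y. q y = (\<Sum>j\<le>N. \<alpha> j * cheb j (y / of_real b))"
  shows "cheb_approx b R NN n q y = (\<Sum>j\<le>n. \<alpha> j * cheb j (y / of_real b))"
  unfolding cheb_approx_def using assms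
  by (intro sum.cong refl) (simp add: cheb_weight_disc_cheb_coeff)

definition cheb_nodal_weight :: "real \<Rightarrow> real \<Rightarrow> nat \<Rightarrow> nat \<Rightarrow> nat \<Rightarrow> complex \<Rightarrow> complex" where
  "cheb_nodal_weight b R N n s y =
     (\<Sum>l\<le>n. cheb_weight l * inverse (cheb_node R N s) ^ l / of_nat N * cheb l (y / of_real b))"

lemma cheb_approx_nodal:
  "cheb_approx b R N n g y
     = (\<Sum>s<N. g (joukowski b (cheb_node R N s)) * cheb_nodal_weight b R N n s y)"
  unfolding cheb_approx_def disc_cheb_coeff_def cheb_nodal_weight_def
  by (simp add: sum_distrib_left sum_distrib_right sum_divide_distrib mult_ac flip: sum.swap[of _ "{..<N}"])

lemma cheb_nodal_weight_in_upoly: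
  assumes "b \<noteq> 0"
  shows "cheb_nodal_weight b R N n s \<in> upoly n"
  unfolding upoly_eq_cheb_span[OF assms] cheb_nodal_weight_def
  by (intro cheb_span_sum cheb_span_scale cheb_in_cheb_span) auto

section \<open>Error of the one-variable approximation\<close>

lemma norm_taylor_term_le:
  assumes "h holomorphic_on UNIV" "r > 0"
    and "\<And>t. norm t = 2 * r \<Longrightarrow> norm (h t) \<le> B"
    and "norm y \<le> r"
  shows "norm ((deriv ^^ k) h 0 / fact k * y ^ k) \<le> B / 2 ^ k"
proof -
  have "norm (of_real (2 * r) :: complex) = 2 * r"
    using assms(2) by simp
  then have "B \<ge> 0"
    using assms(3) by (meson norm_ge_zero order_trans)
  have "norm ((deriv ^^ k) h 0) \<le> fact k * B / (2 * r) ^ k"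
    using assms(1-3) holomorphic_on_subset[OF assms(1)] holomorphic_on_imp_continuous_on
    by (intro Cauchy_inequality) auto
  then have "norm ((deriv ^^ k) h 0) * norm y ^ k / fact k \<le> (fact k * B / (2 * r) ^ k) * r ^ k / fact k"
    using assms(2,4) \<open>B \<ge> 0\<close> by (intro divide_right_mono mult_mono power_mono) auto
  also have "\<dots> = B / 2 ^ k"
    using assms(2) by (simp add: field_simps power_mult_distrib)
  finally show ?thesis
    by (simp add: norm_mult norm_divide norm_power)
qed

lemma holomorphic_taylor_error:
  assumes "h holomorphic_on UNIV" "r > 0"
    and "\<And>t. norm t = 2 * r \<Longrightarrow> norm (h t) \<le> B"
    and "norm y \<le> r"
  shows "norm (h y - (\<Sum>k\<le>N. (deriv ^^ k) h 0 / fact k * y ^ k)) \<le> B / 2 ^ N"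
proof -
  define a where "a k = (deriv ^^ k) h 0 / fact k * y ^ k" for k
  have "a sums h y"
    unfolding a_def using holomorphic_power_series[of h 0 "r + 1" y] assms(1,4)
    by (simp add: holomorphic_on_subset)
  then have tail: "(\<lambda>i. a (i + Suc N)) sums (h y - (\<Sum>k\<le>N. a k))"
    using sums_split_initial_segment[of a "h y" "Suc N"] by (simp add: lessThan_Suc_atMost)
  have geometric: "(\<lambda>i. B / 2 ^ (i + Suc N)) sums (B / 2 ^ N)"
    using sums_mult[OF geometric_sums[of "1 / 2 :: real"], of "B / 2 ^ Suc N"]
    by (simp add: power_add field_simps)
  have "norm (\<Sum>i. a (i + Suc N)) \<le> (\<Sum>i. B / 2 ^ (i + Suc N))"
  proof (rule norm_suminf_le)
    show "norm (a (i + Suc N)) \<le> B / 2 ^ (i + Suc N)" for i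
      unfolding a_def by (rule norm_taylor_term_le[OF assms])
    show "summable (\<lambda>i. B / 2 ^ (i + Suc N))"
      using geometric by (rule sums_summable)
  qed
  then show ?thesis
    using tail geometric unfolding a_def by (simp add: sums_iff)
qed

lemma sum_inverse_powers_tail_le:
  fixes R :: real
  assumes "R > 1"
  shows "(\<Sum>j\<in>{Suc n..N}. 1 / R ^ j) \<le> 1 / (R ^ n * (R - 1))"
proof -
  define x where "x = 1 / R"
  have x: "0 < x" "x < 1"
    unfolding x_def using assms by auto
  have "(\<Sum>j\<in>{Suc n..N}. 1 / R ^ j) = (\<Sum>j\<in>{Suc n..N}. x ^ j)"
    unfolding x_def by (simp add: power_one_over)
  also have "\<dots> \<le> x ^ Suc n / (1 - x)"
    using x by (auto simp: sum_gp intro!: divide_right_mono)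
  also have "\<dots> = 1 / (R ^ n * (R - 1))"
    unfolding x_def using assms by (simp add: field_simps power_one_over)
  finally show ?thesis .
qed

lemma norm_cheb_expansion_coeff_le:
  assumes "2 * N < NN" "b \<noteq> 0" "R > 0" "j \<le> N"
    and q: "\<And>y. q y = (\<Sum>j\<le>N. \<alpha> j * cheb j (y / of_real b))"
    and bound: "\<And>s. s < NN \<Longrightarrow> norm (q (joukowski b (cheb_node R NN s))) \<le> M"
  shows "norm (\<alpha> j) \<le> 2 * M / R ^ j"
proof -
  have "\<alpha> j = cheb_weight j * disc_cheb_coeff b R NN q j"
    using cheb_weight_disc_cheb_coeff[OF assms(1-4) q] by simp
  then have "norm (\<alpha> j) = norm (cheb_weight j) * norm (disc_cheb_coeff b R NN q j)"
    by (simp add: norm_mult)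
  also have "\<dots> \<le> 2 * (M / R ^ j)"
    using assms(1,3) bound by (intro mult_mono norm_disc_cheb_coeff_le) (auto simp: cheb_weight_def)
  finally show ?thesis
    by simp
qed

lemma cheb_approx_truncation_error:
  assumes "2 * N < NN" "n \<le> N" "b > 0" "R > 1"
    and q: "\<And>y. q y = (\<Sum>j\<le>N. \<alpha> j * cheb j (y / of_real b))"
    and bound: "\<And>s. s < NN \<Longrightarrow> norm (q (joukowski b (cheb_node R NN s))) \<le> M"
    and "Im y = 0" "norm y \<le> b"
  shows "norm (q y - cheb_approx b R NN n q y) \<le> 2 * M / (R ^ n * (R - 1))"
proof -
  have "NN > 0"
    using assms(1) by simp
  then have "M \<ge> 0"
    using bound[of 0] by (meson norm_ge_zero order_trans)
  have "cheb_approx b R NN n q y = (\<Sum>j\<le>n. \<alpha> j * cheb j (y / of_real b))"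
    using assms(3,4) by (intro cheb_approx_cheb_expansion[OF assms(1,2) _ _ q]) auto
  then have "q y - cheb_approx b R NN n q y = (\<Sum>j\<in>{..N} - {..n}. \<alpha> j * cheb j (y / of_real b))"
    unfolding q[of y] using assms(2) by (subst sum_diff) auto
  also have "{..N} - {..n} = {Suc n..N}"
    by auto
  finally have "norm (q y - cheb_approx b R NN n q y) = norm (\<Sum>j\<in>{Suc n..N}. \<alpha> j * cheb j (y / of_real b))"
    by simp
  also have "\<dots> \<le> (\<Sum>j\<in>{Suc n..N}. 2 * M * (1 / R ^ j))"
  proof (rule sum_norm_le)
    fix j assume "j \<in> {Suc n..N}"
    then have "norm (\<alpha> j) \<le> 2 * M * (1 / R ^ j)"
      using norm_cheb_expansion_coeff_le[OF assms(1) _ _ _ q bound] assms(3,4) by simp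
    moreover have "norm (cheb j (y / of_real b)) \<le> 1"
      using assms(3,7,8) by (intro norm_cheb_le_1) (auto simp: norm_divide)
    ultimately have "norm (\<alpha> j) * norm (cheb j (y / of_real b)) \<le> 2 * M * (1 / R ^ j) * 1"
      using \<open>M \<ge> 0\<close> assms(4) by (intro mult_mono) auto
    then show "norm (\<alpha> j * cheb j (y / of_real b)) \<le> 2 * M * (1 / R ^ j)"
      by (simp add: norm_mult)
  qed
  also have "\<dots> \<le> 2 * M * (1 / (R ^ n * (R - 1)))"
    unfolding sum_distrib_left[symmetric]
    using sum_inverse_powers_tail_le[OF assms(4)] \<open>M \<ge> 0\<close> by (intro mult_left_mono) auto
  finally show ?thesis
    by simp
qed

lemma power_sum_cheb_expansion:
  assumes "b \<noteq> 0"
  shows "\<exists>\<alpha>. \<forall>t. (\<Sum>k\<le>N. c k * t ^ k) = (\<Sum>j\<le>N. \<alpha> j * cheb j (t / of_real b))"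
proof -
  have "(\<lambda>t. \<Sum>k\<le>N. c k * t ^ k) \<in> upoly N"
    by (intro upoly_sum upoly_scale upoly_mono[OF _ power_in_upoly]) auto
  then show ?thesis
    using upoly_eq_cheb_span[OF assms] unfolding cheb_span_def by auto
qed

lemma cheb_approx_error:
  assumes hol: "h holomorphic_on UNIV" and "b > 0" "R > 1" "2 * N < NN" "n \<le> N"
    and hB: "\<And>t. norm t = b * (R + inverse R) \<Longrightarrow> norm (h t) \<le> B"
    and hM: "\<And>s. s < NN \<Longrightarrow> norm (h (joukowski b (cheb_node R NN s))) \<le> M"
    and y: "Im y = 0" "norm y \<le> b"
  shows "norm (h y - cheb_approx b R NN n h y)
           \<le> (1 + (R + 1) / (R - 1)) * (B / 2 ^ N) + 2 * (M + B / 2 ^ N) / (R ^ n * (R - 1))"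
proof -
  define \<rho> where "\<rho> = b * (R + inverse R) / 2"
  define \<eta> where "\<eta> = B / 2 ^ N"
  define q where "q t = (\<Sum>k\<le>N. (deriv ^^ k) h 0 / fact k * t ^ k)" for t
  have "b \<le> \<rho>"
    unfolding \<rho>_def using mult_left_mono[OF joukowski_radius_ge_1, of R b] assms(2,3) by simp
  have "\<rho> > 0"
    using \<open>b \<le> \<rho>\<close> assms(2) by simp
  have hB': "norm (h t) \<le> B" if "norm t = 2 * \<rho>" for t
    using hB that unfolding \<rho>_def by simp
  have taylor: "norm (h t - q t) \<le> \<eta>" if "norm t \<le> \<rho>" for t
    unfolding q_def \<eta>_def by (rule holomorphic_taylor_error[OF hol \<open>\<rho> > 0\<close> hB' that])
  have nodes: "norm (joukowski b (cheb_node R NN s)) \<le> \<rho>" for s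
    unfolding \<rho>_def using assms(2,3) by (intro norm_joukowski_cheb_node_le) auto
  have "b \<noteq> 0"
    using assms(2) by simp
  then obtain \<alpha> where \<alpha>: "\<And>t. q t = (\<Sum>j\<le>N. \<alpha> j * cheb j (t / of_real b))"
    unfolding q_def
    using power_sum_cheb_expansion[where c = "\<lambda>k. (deriv ^^ k) h 0 / fact k" and N = N] by blast
  have "norm (q (joukowski b (cheb_node R NN s))) \<le> M + \<eta>" if "s < NN" for s
    using hM[OF that] taylor[OF nodes, of s]
      norm_triangle_ineq2[of "q (joukowski b (cheb_node R NN s))" "h (joukowski b (cheb_node R NN s))"]
    by (simp add: norm_minus_commute)
  then have truncation: "norm (q y - cheb_approx b R NN n q y) \<le> 2 * (M + \<eta>) / (R ^ n * (R - 1))"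
    using assms(2-5) y by (intro cheb_approx_truncation_error[OF _ _ _ _ \<alpha>]) auto
  have stability: "norm (cheb_approx b R NN n (\<lambda>t. q t - h t) y) \<le> (R + 1) / (R - 1) * \<eta>"
    using assms(2-4) y taylor[OF nodes] by (intro norm_cheb_approx_le) (auto simp: norm_minus_commute)
  have "h y - cheb_approx b R NN n h y
      = (h y - q y) + (q y - cheb_approx b R NN n q y) + cheb_approx b R NN n (\<lambda>t. q t - h t) y"
    unfolding cheb_approx_diff by simp
  also have "norm \<dots> \<le> norm (h y - q y) + norm (q y - cheb_approx b R NN n q y)
      + norm (cheb_approx b R NN n (\<lambda>t. q t - h t) y)"
    by (meson norm_triangle_ineq add_right_mono order_trans)
  also have "\<dots> \<le> \<eta> + 2 * (M + \<eta>) / (R ^ n * (R - 1)) + (R + 1) / (R - 1) * \<eta>"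
    using taylor[of y] y \<open>b \<le> \<rho>\<close> truncation stability by simp
  finally show ?thesis
    unfolding \<eta>_def by (simp add: algebra_simps)
qed

section \<open>Tensor products\<close>

definition vec_upd :: "'a ^ 'n \<Rightarrow> 'n \<Rightarrow> 'a \<Rightarrow> 'a ^ 'n" where
  "vec_upd x v t = (\<chi> j. if j = v then t else x $ j)"

lemma vec_upd_nth [simp]: "vec_upd x v t $ j = (if j = v then t else x $ j)"
  unfolding vec_upd_def by simp

lemma vec_upd_same [simp]: "vec_upd x v (x $ v) = x"
  by (simp add: vec_eq_iff)

lemma bounded_linear_axis: "bounded_linear (axis v :: complex \<Rightarrow> complex ^ 'n)"
proof (rule bounded_linear_intro[where K = 1])
  show "axis v (s + t) = axis v s + axis v t" "axis v (r *\<^sub>R t) = r *\<^sub>R axis v t" for r s t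
    by (simp_all add: vec_eq_iff axis_def)
  show "norm (axis v t) \<le> norm t * 1" for t :: complex
    by (simp add: norm_eq_sqrt_inner inner_axis_axis)
qed

lemma vec_upd_eq_axis:
  fixes x :: "complex ^ 'n"
  shows "vec_upd x v t = axis v t + (x - axis v (x $ v))"
  by (simp add: vec_eq_iff axis_def)

lemma entire_cm_slice_holomorphic:
  assumes "entire_cm f"
  shows "(\<lambda>t. f (vec_upd x v t)) holomorphic_on UNIV"
proof -
  have "(\<lambda>t. f (vec_upd x v t)) field_differentiable (at t)" for t
  proof -
    obtain L where L: "(f has_derivative L) (at (vec_upd x v t))"
      and complex_linear: "\<And>c y. L (c *s y) = c * L y"
      using assms unfolding entire_cm_def by blast
    have "((\<lambda>t. vec_upd x v t) has_derivative axis v) (at t)"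
      unfolding vec_upd_eq_axis
      by (intro has_derivative_add_const bounded_linear_imp_has_derivative bounded_linear_axis)
    from has_derivative_compose[OF this L]
    have "((\<lambda>t. f (vec_upd x v t)) has_derivative (\<lambda>h. L (axis v h))) (at t)"
      by simp
    moreover have "(\<lambda>h. L (axis v h)) = (\<lambda>h. L (axis v 1) * h)"
    proof
      fix h :: complex
      have "axis v h = h *s axis v 1"
        by (simp add: vec_eq_iff axis_def)
      then show "L (axis v h) = L (axis v 1) * h"
        by (simp add: complex_linear mult.commute)
    qed
    ultimately show ?thesis
      unfolding field_differentiable_def has_field_derivative_def by auto
  qed
  then show ?thesis
    unfolding holomorphic_on_def using field_differentiable_at_within by blast
qed

definition coord_apply ::
    "(('a \<Rightarrow> 'b) \<Rightarrow> 'a \<Rightarrow> 'b) \<Rightarrow> 'n \<Rightarrow> ('a ^ 'n \<Rightarrow> 'b) \<Rightarrow> 'a ^ 'n \<Rightarrow> 'b" where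
  "coord_apply T v H x = T (\<lambda>t. H (vec_upd x v t)) (x $ v)"

lemma sum_PiE_insert:
  assumes "v \<notin> S"
  shows "(\<Sum>s\<in>T v. \<Sum>\<sigma>\<in>PiE S T. F (\<sigma>(v := s))) = (\<Sum>\<sigma>\<in>PiE (insert v S) T. F \<sigma>)"
proof -
  have "(\<Sum>s\<in>T v. \<Sum>\<sigma>\<in>PiE S T. F (\<sigma>(v := s))) = (\<Sum>(s, \<sigma>)\<in>T v \<times> PiE S T. F (\<sigma>(v := s)))"
    by (simp add: sum.cartesian_product)
  also have "\<dots> = sum F ((\<lambda>(s, \<sigma>). \<sigma>(v := s)) ` (T v \<times> PiE S T))"
    using inj_combinator[OF assms, of T] by (simp add: sum.reindex case_prod_beta')
  finally show ?thesis
    by (simp add: PiE_insert_eq)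
qed

lemma foldr_coord_apply_nodal:
  fixes T :: "('a \<Rightarrow> 'b :: comm_semiring_1) \<Rightarrow> 'a \<Rightarrow> 'b"
  assumes nodal: "\<And>g y. T g y = (\<Sum>s\<in>I. g (p s) * W s y)" and "finite I"
  shows "distinct vs \<Longrightarrow> foldr (coord_apply T) vs H x
    = (\<Sum>\<sigma>\<in>PiE (set vs) (\<lambda>_. I). H (\<chi> j. if j \<in> set vs then p (\<sigma> j) else x $ j)
         * (\<Prod>j\<in>set vs. W (\<sigma> j) (x $ j)))"
proof (induction vs arbitrary: x)
  case Nil
  then show ?case
    by simp
next
  case (Cons v vs)
  define S where "S = set vs"
  have "v \<notin> S" "finite S" "distinct vs"
    using Cons.prems unfolding S_def by auto
  then have IH: "\<And>y. foldr (coord_apply T) vs H y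
      = (\<Sum>\<sigma>\<in>PiE S (\<lambda>_. I). H (\<chi> j. if j \<in> S then p (\<sigma> j) else y $ j) * (\<Prod>j\<in>S. W (\<sigma> j) (y $ j)))"
    using Cons.IH unfolding S_def by blast
  define F where "F \<sigma> = H (\<chi> j. if j \<in> insert v S then p (\<sigma> j) else x $ j)
         * (\<Prod>j\<in>insert v S. W (\<sigma> j) (x $ j))" for \<sigma>
  have "foldr (coord_apply T) (v # vs) H x = coord_apply T v (foldr (coord_apply T) vs H) x"
    by simp
  also have "\<dots> = (\<Sum>s\<in>I. foldr (coord_apply T) vs H (vec_upd x v (p s)) * W s (x $ v))"
    by (simp only: coord_apply_def nodal)
  also have "\<dots> = (\<Sum>s\<in>I. \<Sum>\<sigma>\<in>PiE S (\<lambda>_. I).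
           H (\<chi> j. if j \<in> S then p (\<sigma> j) else vec_upd x v (p s) $ j)
           * (\<Prod>j\<in>S. W (\<sigma> j) (vec_upd x v (p s) $ j)) * W s (x $ v))"
    by (simp only: IH sum_distrib_right)
  also have "\<dots> = (\<Sum>s\<in>I. \<Sum>\<sigma>\<in>PiE S (\<lambda>_. I). F (\<sigma>(v := s)))"
  proof (intro sum.cong refl)
    fix s \<sigma> assume "\<sigma> \<in> PiE S (\<lambda>_. I)"
    have "(\<chi> j. if j \<in> S then p (\<sigma> j) else vec_upd x v (p s) $ j)
        = (\<chi> j. if j \<in> insert v S then p ((\<sigma>(v := s)) j) else x $ j)"
      using \<open>v \<notin> S\<close> by (auto simp: vec_eq_iff)
    moreover have "(\<Prod>j\<in>S. W (\<sigma> j) (vec_upd x v (p s) $ j)) = (\<Prod>j\<in>S. W ((\<sigma>(v := s)) j) (x $ j))"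
      using \<open>v \<notin> S\<close> by (intro prod.cong) auto
    ultimately show "H (\<chi> j. if j \<in> S then p (\<sigma> j) else vec_upd x v (p s) $ j)
        * (\<Prod>j\<in>S. W (\<sigma> j) (vec_upd x v (p s) $ j)) * W s (x $ v) = F (\<sigma>(v := s))"
      unfolding F_def using \<open>v \<notin> S\<close> \<open>finite S\<close> by (simp add: mult_ac)
  qed
  also have "\<dots> = sum F (PiE (insert v S) (\<lambda>_. I))"
    using sum_PiE_insert[OF \<open>v \<notin> S\<close>, where T = "\<lambda>_. I"] by simp
  finally show ?case
    unfolding F_def S_def by simp
qed

lemma polyQ_sum:
  assumes "finite I" "\<And>i. i \<in> I \<Longrightarrow> P i \<in> polyQ n"
  shows "(\<lambda>x. \<Sum>i\<in>I. P i x) \<in> polyQ n"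
proof -
  have "\<forall>i\<in>I. \<exists>c. P i = (\<lambda>x. \<Sum>k\<in>{k. \<forall>j. k j \<le> n}. c k * (\<Prod>j\<in>UNIV. (x $ j) ^ k j))"
    using assms(2) unfolding polyQ_def by blast
  then obtain c where c: "\<forall>i\<in>I. P i = (\<lambda>x. \<Sum>k\<in>{k. \<forall>j. k j \<le> n}. c i k * (\<Prod>j\<in>UNIV. (x $ j) ^ k j))"
    by (rule bchoice[elim_format]) blast
  have eq: "(\<lambda>x. \<Sum>i\<in>I. P i x)
      = (\<lambda>x. \<Sum>k\<in>{k. \<forall>j. k j \<le> n}. (\<Sum>i\<in>I. c i k) * (\<Prod>j\<in>UNIV. (x $ j) ^ k j))"
    using c by (simp add: sum_distrib_right sum.swap[of _ I])
  show ?thesis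
    unfolding polyQ_def mem_Collect_eq by (rule exI[of _ "\<lambda>k. \<Sum>i\<in>I. c i k"]) (rule eq)
qed

lemma polyQ_scale:
  assumes "P \<in> polyQ n"
  shows "(\<lambda>x. a * P x) \<in> polyQ n"
proof -
  obtain c where "P = (\<lambda>x. \<Sum>k\<in>{k. \<forall>j. k j \<le> n}. c k * (\<Prod>j\<in>UNIV. (x $ j) ^ k j))"
    using assms unfolding polyQ_def by blast
  then have eq: "(\<lambda>x. a * P x) = (\<lambda>x. \<Sum>k\<in>{k. \<forall>j. k j \<le> n}. (a * c k) * (\<Prod>j\<in>UNIV. (x $ j) ^ k j))"
    by (simp add: sum_distrib_left mult.assoc)
  show ?thesis
    unfolding polyQ_def mem_Collect_eq by (rule exI[of _ "\<lambda>k. a * c k"]) (rule eq)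
qed

lemma polyQ_prod_upoly:
  fixes g :: "'m :: finite \<Rightarrow> complex \<Rightarrow> complex"
  assumes "\<And>j. g j \<in> upoly n"
  shows "(\<lambda>x :: complex ^ 'm. \<Prod>j\<in>UNIV. g j (x $ j)) \<in> polyQ n"
proof -
  have "\<forall>j. \<exists>q. degree q \<le> n \<and> g j = poly q"
    using assms unfolding upoly_def by blast
  then obtain p where p: "\<forall>j. degree (p j) \<le> n \<and> g j = poly (p j)"
    by (rule choice[elim_format]) blast
  have poly_expansion: "g j y = (\<Sum>i\<le>n. coeff (p j) i * y ^ i)" for j y
  proof -
    have "g j y = poly (\<Sum>i\<le>n. monom (coeff (p j) i) i) y"
      using p poly_as_sum_of_monoms'[of "p j" n] by simp
    then show ?thesis
      by (simp add: poly_sum poly_monom)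
  qed
  have "{k :: 'm \<Rightarrow> nat. \<forall>j. k j \<le> n} = PiE UNIV (\<lambda>_. {..n})"
    by (auto simp: PiE_UNIV_domain)
  then have eq: "(\<lambda>x :: complex ^ 'm. \<Prod>j\<in>UNIV. g j (x $ j))
      = (\<lambda>x. \<Sum>k\<in>{k. \<forall>j. k j \<le> n}. (\<Prod>j\<in>UNIV. coeff (p j) (k j)) * (\<Prod>j\<in>UNIV. (x $ j) ^ k j))"
    by (simp add: poly_expansion prod_sum_PiE prod.distrib)
  show ?thesis
    unfolding polyQ_def mem_Collect_eq by (rule exI[of _ "\<lambda>k. \<Prod>j\<in>UNIV. coeff (p j) (k j)"]) (rule eq)
qed

lemma foldr_coord_apply_error:
  fixes T :: "('a \<Rightarrow> 'b :: real_normed_vector) \<Rightarrow> 'a \<Rightarrow> 'b" and x :: "'a ^ 'n"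
  assumes linear: "\<And>g h y. T (\<lambda>t. g t - h t) y = T g y - T h y"
    and stable: "\<And>g y c. y \<in> Y \<Longrightarrow> (\<And>s. s \<in> I \<Longrightarrow> norm (g (p s)) \<le> c) \<Longrightarrow> norm (T g y) \<le> \<Lambda> * c"
    and nodes: "\<And>s. s \<in> I \<Longrightarrow> p s \<in> D"
    and step: "\<And>x v. \<forall>j. (x :: 'a ^ 'n) $ j \<in> D \<Longrightarrow> x $ v \<in> Y \<Longrightarrow> norm (H x - coord_apply T v H x) \<le> E"
  shows "distinct vs \<Longrightarrow> \<forall>j. x $ j \<in> D \<Longrightarrow> \<forall>j\<in>set vs. x $ j \<in> Y
           \<Longrightarrow> norm (H x - foldr (coord_apply T) vs H x) \<le> (\<Sum>i<length vs. \<Lambda> ^ i) * E"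
proof (induction vs arbitrary: x)
  case Nil
  then show ?case
    by simp
next
  case (Cons v vs)
  define S where "S = (\<Sum>i<length vs. \<Lambda> ^ i)"
  define G where "G t = H (vec_upd x v t) - foldr (coord_apply T) vs H (vec_upd x v t)" for t
  have "T G (x $ v) = coord_apply T v H x - foldr (coord_apply T) (v # vs) H x"
    unfolding G_def by (simp only: linear foldr_Cons o_apply coord_apply_def)
  then have "H x - foldr (coord_apply T) (v # vs) H x = (H x - coord_apply T v H x) + T G (x $ v)"
    by simp
  also have "norm \<dots> \<le> E + \<Lambda> * (S * E)"
  proof (rule norm_triangle_le[OF add_mono])
    show "norm (H x - coord_apply T v H x) \<le> E"
      using Cons.prems by (intro step) auto
    have "norm (G (p s)) \<le> S * E" if "s \<in> I" for s
      unfolding G_def S_def using Cons.prems nodes[OF that] by (intro Cons.IH) auto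
    then show "norm (T G (x $ v)) \<le> \<Lambda> * (S * E)"
      using Cons.prems by (intro stable) auto
  qed
  also have "\<dots> = (1 + \<Lambda> * S) * E"
    by (simp add: distrib_right)
  also have "1 + \<Lambda> * S = (\<Sum>i<length (v # vs). \<Lambda> ^ i)"
    unfolding S_def length_Cons sum.lessThan_Suc_shift by (simp add: sum_distrib_left)
  finally show ?case .
qed

lemma coord_cheb_approx_error:
  fixes f :: "complex ^ 'm \<Rightarrow> complex" and x :: "complex ^ 'm"
  assumes "entire_cm f" "b > 0" "R > 1" "2 * N < NN" "n \<le> N"
    and fB: "\<And>w. \<forall>j. norm (w $ j) \<le> b * (R + inverse R) \<Longrightarrow> norm (f w) \<le> B"
    and fM: "\<And>w. \<forall>j. norm (w $ j) \<le> b * (R + inverse R) / 2 \<Longrightarrow> norm (f w) \<le> M"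
    and x: "\<forall>j. norm (x $ j) \<le> b * (R + inverse R) / 2" and "Im (x $ v) = 0" "norm (x $ v) \<le> b"
  shows "norm (f x - coord_apply (cheb_approx b R NN n) v f x)
     \<le> (1 + (R + 1) / (R - 1)) * (B / 2 ^ N) + 2 * (M + B / 2 ^ N) / (R ^ n * (R - 1))"
proof -
  have "0 \<le> b * (R + inverse R)"
    using assms(2,3) by simp
  have hB: "norm (f (vec_upd x v t)) \<le> B" if t: "norm t = b * (R + inverse R)" for t
  proof (intro fB allI)
    fix j
    show "norm (vec_upd x v t $ j) \<le> b * (R + inverse R)"
      using t x[rule_format, of j] \<open>0 \<le> b * (R + inverse R)\<close> by auto
  qed
  have hM: "norm (f (vec_upd x v (joukowski b (cheb_node R NN s)))) \<le> M" for s
    using x norm_joukowski_cheb_node_le[of b R NN s] assms(2,3) by (intro fM) auto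
  have "norm (f (vec_upd x v (x $ v)) - cheb_approx b R NN n (\<lambda>t. f (vec_upd x v t)) (x $ v))
    \<le> (1 + (R + 1) / (R - 1)) * (B / 2 ^ N) + 2 * (M + B / 2 ^ N) / (R ^ n * (R - 1))"
    by (rule cheb_approx_error[OF entire_cm_slice_holomorphic[OF assms(1)] assms(2-5) hB hM assms(9,10)])
  then show ?thesis
    unfolding coord_apply_def by simp
qed

lemma tensor_cheb_approx_error:
  fixes f :: "complex ^ 'm \<Rightarrow> complex"
  assumes "entire_cm f" "b > 0" "R > 1" "2 * N < NN" "n \<le> N"
    and fB: "\<And>w. \<forall>j. norm (w $ j) \<le> b * (R + inverse R) \<Longrightarrow> norm (f w) \<le> B"
    and fM: "\<And>w. \<forall>j. norm (w $ j) \<le> b * (R + inverse R) / 2 \<Longrightarrow> norm (f w) \<le> M"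
    and vs: "set vs = UNIV" "distinct vs" and "x \<in> cubeQ b"
  shows "norm (f (cvec x) - foldr (coord_apply (cheb_approx b R NN n)) vs f (cvec x))
     \<le> (\<Sum>i<CARD('m). ((R + 1) / (R - 1)) ^ i)
        * ((1 + (R + 1) / (R - 1)) * (B / 2 ^ N) + 2 * (M + B / 2 ^ N) / (R ^ n * (R - 1)))"
proof -
  define \<rho> where "\<rho> = b * (R + inverse R) / 2"
  have "length vs = CARD('m)"
    using vs distinct_card by fastforce
  have "b \<le> \<rho>"
    unfolding \<rho>_def using mult_left_mono[OF joukowski_radius_ge_1, of R b] assms(2,3) by simp
  have bound: "norm (cvec x $ j) \<le> b" "Im (cvec x $ j) = 0" for j
    using \<open>x \<in> cubeQ b\<close> unfolding cubeQ_def cvec_def by simp_all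
  moreover have "norm (cvec x $ j) \<le> \<rho>" for j
    using bound(1)[of j] \<open>b \<le> \<rho>\<close> by linarith
  ultimately have coords: "\<forall>j. cvec x $ j \<in> {t. norm t \<le> \<rho>}"
    "\<forall>j\<in>set vs. cvec x $ j \<in> {y. Im y = 0 \<and> norm y \<le> b}"
    by simp_all
  have step: "norm (f y - coord_apply (cheb_approx b R NN n) v f y)
      \<le> (1 + (R + 1) / (R - 1)) * (B / 2 ^ N) + 2 * (M + B / 2 ^ N) / (R ^ n * (R - 1))"
    if "\<forall>j. y $ j \<in> {t. norm t \<le> \<rho>}" "y $ v \<in> {y. Im y = 0 \<and> norm y \<le> b}"
    for y :: "complex ^ 'm" and v
    using that unfolding \<rho>_def by (intro coord_cheb_approx_error[OF assms(1-7)]) auto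
  show ?thesis
    unfolding \<open>length vs = CARD('m)\<close>[symmetric]
  proof (rule foldr_coord_apply_error[OF cheb_approx_diff _ _ step vs(2)])
    show "norm (cheb_approx b R NN n g y) \<le> (R + 1) / (R - 1) * c"
      if "y \<in> {y. Im y = 0 \<and> norm y \<le> b}"
        "\<And>s. s \<in> {..<NN} \<Longrightarrow> norm (g (joukowski b (cheb_node R NN s))) \<le> c" for g y c
      using that assms(2-4) by (intro norm_cheb_approx_le) auto
    show "joukowski b (cheb_node R NN s) \<in> {t. norm t \<le> \<rho>}" for s
      unfolding \<rho>_def using assms(2,3) norm_joukowski_cheb_node_le by simp
  qed (use coords in auto)
qed

lemma foldr_coord_cheb_approx_in_polyQ:
  fixes f :: "complex ^ 'm \<Rightarrow> complex"
  assumes "b \<noteq> 0" "set vs = UNIV" "distinct vs"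
  shows "foldr (coord_apply (cheb_approx b R NN n)) vs f \<in> polyQ n"
proof -
  have "foldr (coord_apply (cheb_approx b R NN n)) vs f
      = (\<lambda>x. \<Sum>\<sigma>\<in>PiE UNIV (\<lambda>_. {..<NN}). f (\<chi> j. joukowski b (cheb_node R NN (\<sigma> j)))
           * (\<Prod>j\<in>UNIV. cheb_nodal_weight b R NN n (\<sigma> j) (x $ j)))"
    using foldr_coord_apply_nodal[where T = "cheb_approx b R NN n" and I = "{..<NN}",
        OF cheb_approx_nodal finite_lessThan assms(3)] assms(2)
    by (simp add: fun_eq_iff)
  also have "\<dots> \<in> polyQ n"
    using assms(1)
    by (intro polyQ_sum polyQ_scale polyQ_prod_upoly cheb_nodal_weight_in_upoly finite_PiE) auto
  finally show ?thesis .
qed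

lemma entire_cm_bounded_on_polydisc:
  fixes f :: "complex ^ 'm \<Rightarrow> complex"
  assumes "entire_cm f"
  shows "\<exists>B. \<forall>w. (\<forall>j. norm (w $ j) \<le> r) \<longrightarrow> norm (f w) \<le> B"
proof -
  have "continuous_on UNIV f"
    using assms unfolding entire_cm_def
    by (meson continuous_at_imp_continuous_on has_derivative_continuous)
  then have "compact (f ` cball 0 (CARD('m) * r))"
    by (intro compact_continuous_image compact_cball) (auto intro: continuous_on_subset)
  then obtain B where B: "\<And>z. z \<in> f ` cball 0 (CARD('m) * r) \<Longrightarrow> norm z \<le> B"
    using compact_imp_bounded bounded_iff by metis
  have "w \<in> cball 0 (CARD('m) * r)" if "\<forall>j. norm (w $ j) \<le> r" for w :: "complex ^ 'm"
  proof -
    have "norm w \<le> (\<Sum>j\<in>UNIV. norm (w $ j))"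
      unfolding norm_vec_def by (rule L2_set_le_sum) simp
    also have "\<dots> \<le> CARD('m) * r"
      using that sum_bounded_above[of UNIV "\<lambda>j. norm (w $ j)" r] by simp
    finally show ?thesis
      by simp
  qed
  then show ?thesis
    using B by blast
qed

lemma sum_powers_le_mult_power:
  fixes a c :: real
  assumes "1 \<le> a" "a \<le> c"
  shows "(\<Sum>i<m. a ^ i) \<le> real m * c ^ (m - 1)"
proof -
  have "(\<Sum>i<m. a ^ i) \<le> (\<Sum>i<m. c ^ (m - 1))"
  proof (rule sum_mono)
    fix i assume "i \<in> {..<m}"
    then have "a ^ i \<le> c ^ i" "c ^ i \<le> c ^ (m - 1)"
      using assms by (auto intro: power_mono power_increasing)
    then show "a ^ i \<le> c ^ (m - 1)"
      by linarith
  qed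
  then show ?thesis
    by simp
qed

lemma cheb_step_error_le:
  fixes R M \<eta> :: real
  assumes R: "R > 1" and "\<eta> \<ge> 0"
    and small: "\<eta> * (1 + (R + 1) / (R - 1) + 2 / (R - 1)) \<le> 2 * M / R ^ n"
  shows "(1 + (R + 1) / (R - 1)) * \<eta> + 2 * (M + \<eta>) / (R ^ n * (R - 1)) \<le> 2 * R / (R - 1) * M / R ^ n"
proof -
  define \<Lambda> where "\<Lambda> = (R + 1) / (R - 1)"
  have "2 * \<eta> / (R ^ n * (R - 1)) \<le> 2 * \<eta> / (R - 1)"
    using R \<open>\<eta> \<ge> 0\<close> by (intro divide_left_mono) (auto simp: mult_pos_pos)
  moreover have "(1 + \<Lambda>) * \<eta> + 2 * (M + \<eta>) / (R ^ n * (R - 1))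
      = (1 + \<Lambda>) * \<eta> + 2 * \<eta> / (R ^ n * (R - 1)) + 2 * M / (R ^ n * (R - 1))"
    by (simp add: add_divide_distrib distrib_left)
  moreover have "\<eta> * (1 + \<Lambda> + 2 / (R - 1)) = (1 + \<Lambda>) * \<eta> + 2 * \<eta> / (R - 1)"
    by (simp add: algebra_simps)
  ultimately have "(1 + \<Lambda>) * \<eta> + 2 * (M + \<eta>) / (R ^ n * (R - 1))
      \<le> \<eta> * (1 + \<Lambda> + 2 / (R - 1)) + 2 * M / (R ^ n * (R - 1))"
    by linarith
  also have "\<dots> \<le> 2 * M / R ^ n + 2 * M / (R ^ n * (R - 1))"
    using small unfolding \<Lambda>_def by simp
  also have "\<dots> = 2 * R / (R - 1) * M / R ^ n"
    using R by (simp add: field_simps)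
  finally show ?thesis
    unfolding \<Lambda>_def .
qed

lemma telescoped_cheb_error_le:
  fixes R M \<eta> :: real
  assumes R: "R > 1" and "M > 0" "\<eta> \<ge> 0" "m \<ge> 1"
    and small: "\<eta> * (1 + (R + 1) / (R - 1) + 2 / (R - 1)) \<le> 2 * M / R ^ n"
  shows "(\<Sum>i<m. ((R + 1) / (R - 1)) ^ i) * ((1 + (R + 1) / (R - 1)) * \<eta> + 2 * (M + \<eta>) / (R ^ n * (R - 1)))
      \<le> real m * 2 ^ m * (1 - 1 / R) powi (- int m) * M / R ^ n"
proof -
  define L where "L = 2 * R / (R - 1)"
  have "1 \<le> (R + 1) / (R - 1)" "(R + 1) / (R - 1) \<le> L"
    unfolding L_def using R by (auto intro: divide_right_mono)
  then have sum_le: "(\<Sum>i<m. ((R + 1) / (R - 1)) ^ i) \<le> real m * L ^ (m - 1)"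
    by (rule sum_powers_le_mult_power)
  have "L > 0"
    unfolding L_def using R by simp
  have step_le: "(1 + (R + 1) / (R - 1)) * \<eta> + 2 * (M + \<eta>) / (R ^ n * (R - 1)) \<le> L * M / R ^ n"
    unfolding L_def by (rule cheb_step_error_le[OF R \<open>\<eta> \<ge> 0\<close> small])
  have "(\<Sum>i<m. ((R + 1) / (R - 1)) ^ i) * ((1 + (R + 1) / (R - 1)) * \<eta> + 2 * (M + \<eta>) / (R ^ n * (R - 1)))
      \<le> (real m * L ^ (m - 1)) * (L * M / R ^ n)"
    using sum_le step_le R \<open>\<eta> \<ge> 0\<close> \<open>M > 0\<close> \<open>L > 0\<close>
    by (intro mult_mono) (auto intro!: sum_nonneg add_nonneg_nonneg)
  also have "\<dots> = real m * L ^ m * M / R ^ n"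
    using \<open>m \<ge> 1\<close> by (simp add: power_eq_if)
  also have "L ^ m = 2 ^ m * (1 - 1 / R) powi (- int m)"
    unfolding L_def using R
    by (simp add: power_int_minus power_mult_distrib field_simps flip: power_divide)
  finally show ?thesis
    by simp
qed

lemma ex_ge_divide_power2_le:
  fixes B \<delta> :: real
  assumes "\<delta> > 0"
  shows "\<exists>N\<ge>n. B / 2 ^ N \<le> \<delta>"
proof -
  have "\<forall>\<^sub>F N in sequentially. B / 2 ^ N < \<delta> \<and> n \<le> N"
    using order_tendstoD(2)[OF LIMSEQ_divide_realpow_zero[of 2 B] assms] eventually_ge_at_top[of n]
    by (auto intro: eventually_conj)
  then show ?thesis
    by (auto simp: eventually_sequentially intro: less_imp_le)
qed

theorem entire_cm_polyQ_approx:
  fixes f :: "complex ^ 'm \<Rightarrow> complex"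
  assumes ent: "entire_cm f" and b: "b > 0" and R: "R > 1" and "M > 0"
    and fM: "\<And>w. \<forall>j. norm (w $ j) \<le> b * (R + inverse R) / 2 \<Longrightarrow> norm (f w) \<le> M"
  shows "\<exists>P \<in> polyQ n. \<forall>x \<in> cubeQ b. norm (f (cvec x) - P (cvec x))
           \<le> real CARD('m) * 2 ^ CARD('m) * (1 - 1 / R) powi (- int CARD('m)) * (M / R ^ n)"
proof -
  obtain B where fB: "\<And>w. \<forall>j. norm (w $ j) \<le> b * (R + inverse R) \<Longrightarrow> norm (f w) \<le> B"
    using entire_cm_bounded_on_polydisc[OF ent, where r = "b * (R + inverse R)"] by blast
  have "B \<ge> 0"
    using fB[of 0] b R by (simp add: order_trans[OF norm_ge_zero])
  \<comment> \<open>\<open>B\<close> enters only through the Taylor error \<open>B / 2\<^sup>N\<close>, which a large \<open>N\<close> makes negligible.\<close>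
  define c where "c = 1 + (R + 1) / (R - 1) + 2 / (R - 1)"
  have "c > 0"
    unfolding c_def using R by (simp add: add_pos_pos)
  then obtain N where "n \<le> N" and "B / 2 ^ N \<le> 2 * M / R ^ n / c"
    using ex_ge_divide_power2_le[of "2 * M / R ^ n / c" n B] \<open>M > 0\<close> R by auto
  then have small: "B / 2 ^ N * c \<le> 2 * M / R ^ n"
    using mult_right_mono[of "B / 2 ^ N" "2 * M / R ^ n / c" c] \<open>c > 0\<close> by simp
  obtain vs :: "'m list" where vs: "set vs = UNIV" "distinct vs"
    using finite_distinct_list[of "UNIV :: 'm set"] by auto
  define P where "P = foldr (coord_apply (cheb_approx b R (Suc (2 * N)) n)) vs f"
  have "P \<in> polyQ n"
    unfolding P_def using b vs by (intro foldr_coord_cheb_approx_in_polyQ) auto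
  moreover have "norm (f (cvec x) - P (cvec x))
      \<le> real CARD('m) * 2 ^ CARD('m) * (1 - 1 / R) powi (- int CARD('m)) * M / R ^ n"
    if "x \<in> cubeQ b" for x
  proof -
    have "norm (f (cvec x) - P (cvec x))
        \<le> (\<Sum>i<CARD('m). ((R + 1) / (R - 1)) ^ i)
           * ((1 + (R + 1) / (R - 1)) * (B / 2 ^ N) + 2 * (M + B / 2 ^ N) / (R ^ n * (R - 1)))"
      unfolding P_def using \<open>n \<le> N\<close> by (intro tensor_cheb_approx_error[OF ent b R _ _ fB fM vs that]) auto
    also have "\<dots> \<le> real CARD('m) * 2 ^ CARD('m) * (1 - 1 / R) powi (- int CARD('m)) * M / R ^ n"
      using \<open>B \<ge> 0\<close> small unfolding c_def
      by (intro telescoped_cheb_error_le[OF R \<open>M > 0\<close>]) (simp_all add: Suc_le_eq)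
    finally show ?thesis .
  qed
  ultimately show ?thesis
    by auto
qed

lemma norm_le_exp_growth_on_polydisc:
  fixes f :: "complex ^ 'm \<Rightarrow> complex" and w :: "complex ^ 'm" and \<sigma> A r :: real
  assumes "\<sigma> \<ge> 0" "A \<ge> 0"
    and "\<And>w. norm (f w) \<le> A * exp (\<sigma> * (\<Sum>j\<in>UNIV. norm (w $ j)))"
    and "\<forall>j. norm (w $ j) \<le> r"
  shows "norm (f w) \<le> A * exp (\<sigma> * (real CARD('m) * r))"
proof -
  have "(\<Sum>j\<in>UNIV. norm (w $ j)) \<le> CARD('m) * r"
    using assms(4) sum_bounded_above[of UNIV "\<lambda>j. norm (w $ j)" r] by simp
  then have "exp (\<sigma> * (\<Sum>j\<in>UNIV. norm (w $ j))) \<le> exp (\<sigma> * (real CARD('m) * r))"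
    using assms(1) by (simp add: mult_left_mono)
  then show ?thesis
    using assms(3)[of w] assms(2) by (meson mult_left_mono order_trans)
qed

section \<open>The exponent \<open>\<psi>\<close>\<close>

lemma psi_strict_antimono:
  assumes "0 < s" "s < t"
  shows "psi t < psi s"
proof -
  have "sqrt (1 + u\<^sup>2) / u = sqrt (1 / u\<^sup>2 + 1)" if "u > 0" for u :: real
  proof -
    have "sqrt (1 + u\<^sup>2) / u = sqrt ((1 + u\<^sup>2) / u\<^sup>2)"
      using that by (simp add: real_sqrt_divide)
    then show ?thesis
      using that by (simp add: add_divide_distrib)
  qed
  moreover have "1 / t\<^sup>2 < 1 / s\<^sup>2"
    using assms by (intro divide_strict_left_mono power_strict_mono) auto
  ultimately have "sqrt (1 + t\<^sup>2) / t < sqrt (1 + s\<^sup>2) / s"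
    using assms by simp
  moreover have "ln (s + sqrt (1 + s\<^sup>2)) < ln (t + sqrt (1 + t\<^sup>2))"
    using assms by (intro ln_less_cancel_iff[THEN iffD2] add_less_le_mono add_pos_pos)
      (auto intro: power_mono add_pos_nonneg)
  ultimately show ?thesis
    unfolding psi_def by linarith
qed

lemma psi_1_nonneg: "psi 1 \<ge> 0"
proof -
  have "ln (1 + sqrt 2) \<le> (1 + sqrt 2) - 1"
    by (rule ln_le_minus_one) (simp add: add_pos_nonneg)
  then show ?thesis
    unfolding psi_def by simp
qed

lemma psi_8_nonpos: "psi 8 \<le> 0"
proof -
  have "sqrt 65 \<le> sqrt (16\<^sup>2)"
    by (subst real_sqrt_le_iff) simp
  then have sqrt_le: "sqrt 65 \<le> 16"
    by simp
  have "sqrt (8\<^sup>2) \<le> sqrt 65"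
    by (subst real_sqrt_le_iff) simp
  then have sqrt_ge: "8 \<le> sqrt 65"
    by simp
  have "exp (2 :: real) = exp (1 / 2) ^ 4"
    by (simp add: exp_of_nat_mult[symmetric])
  also have "\<dots> \<le> 2 ^ 4"
    by (intro power_mono exp_half_le2) auto
  finally have "2 \<le> ln (8 + sqrt 65)"
    using sqrt_ge by (subst ln_ge_iff) (auto intro: add_pos_nonneg)
  then show ?thesis
    unfolding psi_def using sqrt_le by simp
qed

lemma gamma0_pos: "gamma0 > 0"
proof -
  have nonzero: "x + sqrt (1 + x\<^sup>2) \<noteq> 0" if "x \<ge> 1" for x :: real
  proof -
    have "0 < x + sqrt (1 + x\<^sup>2)"
      using that by (intro add_pos_nonneg) auto
    then show ?thesis
      by simp
  qed
  have "continuous_on {1..8} psi"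
    unfolding psi_def by (intro continuous_intros) (auto simp: nonzero)
  then obtain t where t: "1 \<le> t" "t \<le> 8" "psi t = 0"
    using IVT2'[of psi 8 0 1, OF psi_8_nonpos psi_1_nonneg] by auto
  have "\<exists>!t. t > 0 \<and> psi t = 0"
  proof
    show "t > 0 \<and> psi t = 0"
      using t by simp
    show "s = t" if "s > 0 \<and> psi s = 0" for s
    proof (rule ccontr)
      assume "s \<noteq> t"
      then consider "s < t" | "t < s"
        by linarith
      then show False
        using psi_strict_antimono[of s t] psi_strict_antimono[of t s] that t by cases auto
    qed
  qed
  then have "gamma0 > 0 \<and> psi gamma0 = 0"
    unfolding gamma0_def by (rule theI')
  then show ?thesis
    by simp
qed

text \<open>With \<open>\<tau> = sinh u\<close> the radius \<open>\<tau> + sqrt (1 + \<tau>\<^sup>2)\<close> is \<open>e\<^sup>u\<close>, so the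
  semi-axis of its Joukowski ellipse is \<open>cosh u = sqrt (1 + \<tau>\<^sup>2)\<close>.\<close>

lemma joukowski_radius_arsinh:
  fixes \<tau> :: real
  assumes "\<tau> > 0"
  defines "R \<equiv> \<tau> + sqrt (1 + \<tau>\<^sup>2)"
  shows "R > 1" "(R + inverse R) / 2 = sqrt (1 + \<tau>\<^sup>2)"
proof -
  show "R > 1"
    unfolding R_def using assms(1) by (smt (verit) real_sqrt_ge_one zero_le_power2)
  have "R * (sqrt (1 + \<tau>\<^sup>2) - \<tau>) = 1"
    unfolding R_def by (simp add: algebra_simps power2_eq_square)
  then have "inverse R = sqrt (1 + \<tau>\<^sup>2) - \<tau>"
    by (rule inverse_unique)
  then show "(R + inverse R) / 2 = sqrt (1 + \<tau>\<^sup>2)"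
    unfolding R_def by simp
qed

theorem lemmaL3p7:
  fixes f :: "complex ^ 'm \<Rightarrow> complex"
    and b \<tau> A :: real and n :: nat
  assumes "b > 0" and "\<tau> > gamma0" and "A > 0"
    and "entire_cm f"
    and "\<And>w. norm (f w) \<le> A * exp ((real n / (real CARD('m) * b * \<tau>)) * (\<Sum>j\<in>UNIV. norm (w $ j)))"
  shows "\<exists>P \<in> polyQ n. \<forall>x \<in> cubeQ b.
           norm (f (cvec x) - P (cvec x))
             \<le> real CARD('m) * 2 ^ CARD('m) * (1 - 1 / (\<tau> + sqrt (1 + \<tau>\<^sup>2))) powi (- int CARD('m))
               * A * exp (real n * psi \<tau>)"
proof -
  \<comment> \<open>The hypothesis \<open>\<tau> > \<gamma>\<^sub>0\<close> is used only through \<open>\<tau> > 0\<close>; it is what makes \<open>\<psi>(\<tau>) < 0\<close>.\<close>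
  have "\<tau> > 0"
    using gamma0_pos assms(2) by linarith
  define K where "K = sqrt (1 + \<tau>\<^sup>2)"
  define R where "R = \<tau> + K"
  define \<sigma> where "\<sigma> = real n / (real CARD('m) * b * \<tau>)"
  define M where "M = A * exp (\<sigma> * (CARD('m) * (b * K)))"
  have R: "R > 1" "(R + inverse R) / 2 = K"
    using joukowski_radius_arsinh[OF \<open>\<tau> > 0\<close>] unfolding R_def K_def by auto
  have fM: "norm (f w) \<le> M" if "\<forall>j. norm (w $ j) \<le> b * (R + inverse R) / 2" for w :: "complex ^ 'm"
    unfolding M_def using that R(2) assms(1,3) \<open>\<tau> > 0\<close>
    by (intro norm_le_exp_growth_on_polydisc[OF _ _ assms(5)[folded \<sigma>_def]]) (auto simp: \<sigma>_def)
  have "\<sigma> * (CARD('m) * (b * K)) = real n * (K / \<tau>)"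
    unfolding \<sigma>_def using assms(1) \<open>\<tau> > 0\<close> by simp
  then have key: "M / R ^ n = A * exp (real n * psi \<tau>)"
    unfolding M_def psi_def K_def[symmetric] R_def[symmetric] using R(1)
    by (simp add: right_diff_distrib exp_diff exp_of_nat_mult)
  have "M > 0"
    unfolding M_def using assms(3) by simp
  then obtain P where "P \<in> polyQ n" and P: "\<forall>x\<in>cubeQ b. norm (f (cvec x) - P (cvec x))
      \<le> real CARD('m) * 2 ^ CARD('m) * (1 - 1 / R) powi (- int CARD('m)) * (M / R ^ n)"
    using entire_cm_polyQ_approx[OF assms(4,1) R(1) _ fM] by blast
  then show ?thesis
    using P[unfolded key] unfolding R_def K_def by (auto simp: mult.assoc)
qed

end
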